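(* Suppose that for every $c\in\{1,\dots,K-1\}$, $$\bar p_c(\bm x,\bar Y)=\binom{K-1}{c}^{-1}\sum_{y\notin \bar Y}p(\bm x,y)\qquad(\bm x\in\mathcal X,\ \bar Y\in\overline{\mathcal Y}_c).$$ Let $\gamma\in[0,1]$ and let $\bm\alpha$ satisfy $\alpha_c\ge0$, $\sum_{c=1}^{K-1}\alpha_c=1$. Define the multi-complementary and unlabeled risk $R_{\mathrm{MCUL}}(\bm g)=\sum_{c=1}^{K-1}\alpha_c R^u_c(\bm g)$, where $$R^u_c(\bm g)=\mathbb E_{\bar p_c(\bm x,\bar Y)}\Big[(1-\gamma)\mathcal L(\bm g(\bm x))-\frac{K-1}{c}\sum_{y\in\bar Y}\ell(\bm g(\bm x),y)\Big]+\gamma\,\mathbb E_{p(\bm x)}\big[\mathcal L(\bm g(\bm x))\big].$$ Then for any loss $\ell$ and decision function $\bm g$ (with finite expectations), $R_{\mathrm{MCUL}}(\bm g)=R(\bm g)$.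
   Context: Let $K\ge 2$, $\mathcal X\subseteq\mathbb R^d$ the feature space and $\mathcal Y=\{1,\dots,K\}$ the label space. Let $p(\bm x,y)$ be a joint density on $\mathcal X\times\mathcal Y$ with marginal density $p(\bm x)$. For $c\in\{1,\dots,K-1\}$, $\overline{\mathcal Y}_c$ denotes the collection of all $c$-element subsets of $\{1,\dots,K\}$, and $\bar p_c(\bm x,\bar Y)$ is a density on $\mathcal X\times\overline{\mathcal Y}_c$. A decision function is a map $\bm g:\mathcal X\to\mathbb R^K$, a loss is a function $\ell:\mathbb R^K\times\mathcal Y\to[0,\infty)$, the classification risk is $R(\bm g)=\mathbb E_{p(\bm x,y)}[\ell(\bm g(\bm x),y)]$, and the cumulative loss is $\mathcal L(\bm g(\bm x))=\sum_{y=1}^K\ell(\bm g(\bm x),y)$. *)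

theory Defs
  imports "HOL-Analysis.Analysis"
begin

definition labels :: "nat \<Rightarrow> nat set" where
  "labels K = {1..K}"

definition compl_sets :: "nat \<Rightarrow> nat \<Rightarrow> nat set set" where
  "compl_sets K c = {Y. Y \<subseteq> {1..K} \<and> card Y = c}"

definition cum_loss :: "nat \<Rightarrow> ('v \<Rightarrow> nat \<Rightarrow> real) \<Rightarrow> 'v \<Rightarrow> real" where
  "cum_loss K l v = (\<Sum>y\<in>{1..K}. l v y)"

definition marginal :: "nat \<Rightarrow> ('a \<Rightarrow> nat \<Rightarrow> real) \<Rightarrow> 'a \<Rightarrow> real" where
  "marginal K p x = (\<Sum>y\<in>{1..K}. p x y)"

definition exp_joint :: "'a::euclidean_space set \<Rightarrow> nat \<Rightarrow> ('a \<Rightarrow> nat \<Rightarrow> real)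
    \<Rightarrow> ('a \<Rightarrow> nat \<Rightarrow> real) \<Rightarrow> real" where
  "exp_joint X K p f = (\<Sum>y\<in>{1..K}. LINT x:X|lborel. p x y * f x y)"

definition exp_compl :: "'a::euclidean_space set \<Rightarrow> nat \<Rightarrow> nat \<Rightarrow> ('a \<Rightarrow> nat set \<Rightarrow> real)
    \<Rightarrow> ('a \<Rightarrow> nat set \<Rightarrow> real) \<Rightarrow> real" where
  "exp_compl X K c pb f = (\<Sum>Y\<in>compl_sets K c. LINT x:X|lborel. pb x Y * f x Y)"

definition exp_marg :: "'a::euclidean_space set \<Rightarrow> nat \<Rightarrow> ('a \<Rightarrow> nat \<Rightarrow> real)
    \<Rightarrow> ('a \<Rightarrow> real) \<Rightarrow> real" where
  "exp_marg X K p f = (LINT x:X|lborel. marginal K p x * f x)"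

definition class_risk :: "'a::euclidean_space set \<Rightarrow> nat \<Rightarrow> ('a \<Rightarrow> nat \<Rightarrow> real)
    \<Rightarrow> ('v \<Rightarrow> nat \<Rightarrow> real) \<Rightarrow> ('a \<Rightarrow> 'v) \<Rightarrow> real" where
  "class_risk X K p l g = exp_joint X K p (\<lambda>x y. l (g x) y)"

definition risk_u :: "'a::euclidean_space set \<Rightarrow> nat \<Rightarrow> ('a \<Rightarrow> nat \<Rightarrow> real)
    \<Rightarrow> (nat \<Rightarrow> 'a \<Rightarrow> nat set \<Rightarrow> real) \<Rightarrow> real
    \<Rightarrow> ('v \<Rightarrow> nat \<Rightarrow> real) \<Rightarrow> ('a \<Rightarrow> 'v) \<Rightarrow> nat \<Rightarrow> real" where
  "risk_u X K p pbar \<gamma> l g c =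
     exp_compl X K c (pbar c)
       (\<lambda>x Y. (1 - \<gamma>) * cum_loss K l (g x) - (real (K - 1) / real c) * (\<Sum>y\<in>Y. l (g x) y))
     + \<gamma> * exp_marg X K p (\<lambda>x. cum_loss K l (g x))"

definition risk_MCUL :: "'a::euclidean_space set \<Rightarrow> nat \<Rightarrow> ('a \<Rightarrow> nat \<Rightarrow> real)
    \<Rightarrow> (nat \<Rightarrow> 'a \<Rightarrow> nat set \<Rightarrow> real) \<Rightarrow> real \<Rightarrow> (nat \<Rightarrow> real)
    \<Rightarrow> ('v \<Rightarrow> nat \<Rightarrow> real) \<Rightarrow> ('a \<Rightarrow> 'v) \<Rightarrow> real" where
  "risk_MCUL X K p pbar \<gamma> \<alpha> l g = (\<Sum>c\<in>{1..K-1}. \<alpha> c * risk_u X K p pbar \<gamma> l g c)"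

end

theory Submission imports Defs begin

text \<open>Each unlabeled risk \<open>R\<^sup>u\<^sub>c\<close> already equals \<open>R\<close>, so their convex combination does too.
  Fix \<open>x\<close> and write \<open>p\<^sub>y = p(x,y)\<close>, \<open>l\<^sub>y = \<ell>(g(x),y)\<close>. Every label lies outside exactly
  \<open>binom(K-1,c)\<close> of the \<open>c\<close>-subsets, and every ordered pair \<open>y \<noteq> y'\<close> has \<open>y \<in> Y\<close>, \<open>y' \<notin> Y\<close> for
  \<open>binom(K-2,c-1)\<close> of them; as \<open>(K-1)/c \<cdot> binom(K-2,c-1) = binom(K-1,c)\<close>, the complementary part
  of the integrand sums to \<open>(1-\<gamma>) P L - (P L - \<Sum>\<^sub>y p\<^sub>y l\<^sub>y)\<close> with \<open>P = \<Sum> p\<^sub>y\<close>, \<open>L = \<Sum> l\<^sub>y\<close>, and the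
  unlabeled term \<open>\<gamma> P L\<close> cancels the rest. Integrating this pointwise identity is legitimate
  because every product \<open>p\<^sub>y' l\<^sub>y\<close> is dominated by \<open>p(x) \<L>(g(x))\<close>.\<close>

lemma set_integrable_sum:
  fixes f :: "'i \<Rightarrow> 'a \<Rightarrow> 'b::{banach, second_countable_topology}"
  assumes "\<And>i. i \<in> I \<Longrightarrow> set_integrable M A (f i)"
  shows "set_integrable M A (\<lambda>x. \<Sum>i\<in>I. f i x)"
  using assms unfolding set_integrable_def by (simp add: scaleR_sum_right)

lemma set_integral_sum:
  fixes f :: "'i \<Rightarrow> 'a \<Rightarrow> 'b::{banach, second_countable_topology}"
  assumes "\<And>i. i \<in> I \<Longrightarrow> set_integrable M A (f i)"
  shows "(LINT x:A|M. \<Sum>i\<in>I. f i x) = (\<Sum>i\<in>I. LINT x:A|M. f i x)"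
  using assms unfolding set_integrable_def set_lebesgue_integral_def
  by (simp add: scaleR_sum_right integral_sum)

lemma set_integrable_product_of_sums:
  fixes f h :: "'i \<Rightarrow> 'a \<Rightarrow> real"
  assumes "\<And>i j. i \<in> I \<Longrightarrow> j \<in> J \<Longrightarrow> set_integrable M A (\<lambda>x. f i x * h j x)"
  shows "set_integrable M A (\<lambda>x. (\<Sum>i\<in>I. f i x) * (\<Sum>j\<in>J. h j x))"
  using assms by (simp add: sum_product set_integrable_sum)

lemma set_integrable_summand_product:
  fixes f h :: "'i \<Rightarrow> 'a \<Rightarrow> real"
  assumes int: "set_integrable M A (\<lambda>x. (\<Sum>i\<in>I. f i x) * (\<Sum>j\<in>J. h j x))"
    and A: "A \<in> sets M" and meas: "f i \<in> borel_measurable M" "h j \<in> borel_measurable M"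
    and fin: "finite I" "finite J" and ij: "i \<in> I" "j \<in> J"
    and nonneg: "\<And>i x. i \<in> I \<Longrightarrow> x \<in> A \<Longrightarrow> 0 \<le> f i x" "\<And>j x. j \<in> J \<Longrightarrow> x \<in> A \<Longrightarrow> 0 \<le> h j x"
  shows "set_integrable M A (\<lambda>x. f i x * h j x)"
proof (rule set_integrable_bound[OF int])
  show "set_borel_measurable M A (\<lambda>x. f i x * h j x)"
    unfolding set_borel_measurable_def using A meas by measurable
  have "\<bar>f i x * h j x\<bar> \<le> \<bar>(\<Sum>i\<in>I. f i x) * (\<Sum>j\<in>J. h j x)\<bar>" if "x \<in> A" for x
  proof -
    have "f i x \<le> (\<Sum>i\<in>I. f i x)" "h j x \<le> (\<Sum>j\<in>J. h j x)"
      using fin ij nonneg that by (auto intro: member_le_sum)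
    then show ?thesis
      using ij nonneg that by (simp add: abs_mult mult_mono)
  qed
  then show "AE x in M. x \<in> A \<longrightarrow> norm (f i x * h j x) \<le> norm ((\<Sum>i\<in>I. f i x) * (\<Sum>j\<in>J. h j x))"
    by auto
qed

lemma card_subsets_containing:
  assumes "finite A" "a \<in> A"
  shows "card {Y. Y \<subseteq> A \<and> card Y = Suc k \<and> a \<in> Y} = (card A - 1 choose k)"
proof -
  let ?S = "\<lambda>B m. {Y. Y \<subseteq> B \<and> card Y = m}"
  obtain m where m: "card A = Suc m"
    using assms by (cases "card A") auto
  have split: "?S A (Suc k) = {Y. Y \<subseteq> A \<and> card Y = Suc k \<and> a \<in> Y} \<union> ?S (A - {a}) (Suc k)"
    by auto
  have "card (?S A (Suc k)) = card {Y. Y \<subseteq> A \<and> card Y = Suc k \<and> a \<in> Y} + card (?S (A - {a}) (Suc k))"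
    unfolding split using assms(1) by (intro card_Un_disjoint) auto
  then have "(m choose k) + (m choose Suc k) = card {Y. Y \<subseteq> A \<and> card Y = Suc k \<and> a \<in> Y} + (m choose Suc k)"
    using assms m by (simp add: n_subsets)
  then show ?thesis
    using m by simp
qed

lemma sum_subsets_sum:
  fixes f :: "'a \<Rightarrow> 'b::comm_semiring_1"
  assumes "finite A"
  shows "(\<Sum>Y | Y \<subseteq> A \<and> card Y = Suc k. \<Sum>y\<in>Y. f y) = of_nat (card A - 1 choose k) * (\<Sum>y\<in>A. f y)"
proof -
  have "(\<Sum>Y | Y \<subseteq> A \<and> card Y = Suc k. \<Sum>y\<in>Y. f y)
      = (\<Sum>Y | Y \<subseteq> A \<and> card Y = Suc k. \<Sum>y | y \<in> A \<and> y \<in> Y. f y)"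
    by (intro sum.cong refl arg_cong[where f = "sum f"]) auto
  also have "\<dots> = (\<Sum>y\<in>A. \<Sum>Y | Y \<subseteq> A \<and> card Y = Suc k \<and> y \<in> Y. f y)"
    using assms by (subst sum.swap_restrict) auto
  also have "\<dots> = (\<Sum>y\<in>A. of_nat (card A - 1 choose k) * f y)"
    using assms by (intro sum.cong refl) (simp add: card_subsets_containing)
  finally show ?thesis by (simp add: sum_distrib_left)
qed

lemma sum_subsets_sum_compl:
  fixes f :: "'a \<Rightarrow> 'b::comm_ring_1"
  assumes "finite A"
  shows "(\<Sum>Y | Y \<subseteq> A \<and> card Y = Suc k. \<Sum>y\<in>A - Y. f y) = of_nat (card A - 1 choose Suc k) * (\<Sum>y\<in>A. f y)"
proof (cases "A = {}")
  case False
  then obtain m where m: "card A = Suc m"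
    using assms by (cases "card A") auto
  have "(\<Sum>Y | Y \<subseteq> A \<and> card Y = Suc k. \<Sum>y\<in>A - Y. f y)
      = (\<Sum>Y | Y \<subseteq> A \<and> card Y = Suc k. (\<Sum>y\<in>A. f y) - (\<Sum>y\<in>Y. f y))"
    using assms by (intro sum.cong refl) (simp add: sum_diff)
  also have "\<dots> = (of_nat (Suc m choose Suc k) - of_nat (m choose k)) * (\<Sum>y\<in>A. f y)"
    using assms m by (simp add: sum_subtractf sum_subsets_sum n_subsets algebra_simps)
  finally show ?thesis using m by simp
qed simp

lemma sum_subsets_sum_compl_mult_sum:
  fixes p l :: "'a \<Rightarrow> 'b::comm_ring_1"
  assumes "finite A"
  shows "(\<Sum>Y | Y \<subseteq> A \<and> card Y = Suc k. (\<Sum>y\<in>A - Y. p y) * (\<Sum>y\<in>Y. l y))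
    = of_nat (card A - 2 choose k) * ((\<Sum>y\<in>A. p y) * (\<Sum>y\<in>A. l y) - (\<Sum>y\<in>A. p y * l y))"
proof -
  have "(\<Sum>Y | Y \<subseteq> A \<and> card Y = Suc k. (\<Sum>y\<in>A - Y. p y) * (\<Sum>y\<in>Y. l y))
      = (\<Sum>Y | Y \<subseteq> A \<and> card Y = Suc k. \<Sum>y' | y' \<in> A \<and> y' \<notin> Y. p y' * (\<Sum>y\<in>Y. l y))"
    by (intro sum.cong refl) (simp add: sum_distrib_right set_diff_eq)
  also have "\<dots> = (\<Sum>y'\<in>A. p y' * (\<Sum>Y | Y \<subseteq> A - {y'} \<and> card Y = Suc k. \<Sum>y\<in>Y. l y))"
    using assms by (subst sum.swap_restrict) (auto simp: sum_distrib_left intro!: sum.cong)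
  also have "\<dots> = (\<Sum>y'\<in>A. of_nat (card A - 2 choose k) * (p y' * (\<Sum>y\<in>A. l y) - p y' * l y'))"
    using assms by (intro sum.cong refl) (simp add: sum_subsets_sum sum_diff1 numeral_2_eq_2 algebra_simps)
  finally show ?thesis
    by (simp add: sum_subtractf sum_distrib_left[symmetric] sum_distrib_right)
qed

lemma complementary_label_risk_identity:
  fixes p l :: "'a \<Rightarrow> real"
  assumes "finite A" "1 \<le> c" "c < card A"
  shows "(\<Sum>Y | Y \<subseteq> A \<and> card Y = c. (\<Sum>y\<in>A - Y. p y) / real (card A - 1 choose c)
           * ((1 - \<gamma>) * (\<Sum>y\<in>A. l y) - real (card A - 1) / real c * (\<Sum>y\<in>Y. l y)))
         + \<gamma> * ((\<Sum>y\<in>A. p y) * (\<Sum>y\<in>A. l y))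
       = (\<Sum>y\<in>A. p y * l y)"
proof -
  obtain k where c: "c = Suc k" using assms(2) by (cases c) auto
  obtain m where n: "card A = Suc (Suc m)"
    using assms(3) c by (intro that[of "card A - 2"]) simp
  define S where "S = {Y. Y \<subseteq> A \<and> card Y = c}"
  define C where "C = real (card A - 1 choose c)"
  define r where "r = real (card A - 1) / real c"
  define P where "P = (\<Sum>y\<in>A. p y)"
  define L where "L = (\<Sum>y\<in>A. l y)"
  define D where "D = (\<Sum>y\<in>A. p y * l y)"
  have C_pos: "C > 0" unfolding C_def using assms(3) by simp
  have avoided: "(\<Sum>Y\<in>S. \<Sum>y\<in>A - Y. p y) = C * P"
    unfolding S_def C_def P_def c using sum_subsets_sum_compl[OF assms(1)] by simp
  have separated: "(\<Sum>Y\<in>S. (\<Sum>y\<in>A - Y. p y) * (\<Sum>y\<in>Y. l y)) = real (m choose k) * (P * L - D)"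
    unfolding S_def P_def L_def D_def c using sum_subsets_sum_compl_mult_sum[OF assms(1)] n by simp
  have "real (Suc m) * real (m choose k) = C * real c"
    unfolding C_def c n using Suc_times_binomial_eq[of m k]
    by (simp only: diff_Suc_1 of_nat_mult[symmetric] of_nat_eq_iff)
  then have weight: "r * real (m choose k) = C"
    unfolding r_def using n c by (simp add: field_simps)
  have "(\<Sum>Y\<in>S. (\<Sum>y\<in>A - Y. p y) / C * ((1 - \<gamma>) * L - r * (\<Sum>y\<in>Y. l y)))
      = (\<Sum>Y\<in>S. (1 - \<gamma>) * L / C * (\<Sum>y\<in>A - Y. p y) - r / C * ((\<Sum>y\<in>A - Y. p y) * (\<Sum>y\<in>Y. l y)))"
    using C_pos by (intro sum.cong refl) (simp add: field_simps)
  also have "\<dots> = (1 - \<gamma>) * L / C * (\<Sum>Y\<in>S. \<Sum>y\<in>A - Y. p y)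
        - r / C * (\<Sum>Y\<in>S. (\<Sum>y\<in>A - Y. p y) * (\<Sum>y\<in>Y. l y))"
    by (simp add: sum_subtractf sum_distrib_left)
  also have "\<dots> = (1 - \<gamma>) * (P * L) - (P * L - D)"
    unfolding avoided separated using C_pos weight by (simp add: field_simps)
  finally show ?thesis
    unfolding S_def C_def r_def P_def L_def D_def by (simp add: algebra_simps)
qed

lemma risk_u_eq_class_risk:
  fixes X :: "'a::euclidean_space set" and l :: "'v \<Rightarrow> nat \<Rightarrow> real"
  assumes c: "c \<in> {1..K-1}"
    and X_meas: "X \<in> sets lborel"
    and p_nonneg: "\<And>x y. x \<in> X \<Longrightarrow> y \<in> {1..K} \<Longrightarrow> p x y \<ge> 0"
    and p_meas: "\<And>y. (\<lambda>x. p x y) \<in> borel_measurable lborel"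
    and pbar_c: "\<And>x Y. x \<in> X \<Longrightarrow> Y \<in> compl_sets K c \<Longrightarrow>
        pbar c x Y = (\<Sum>y\<in>{1..K} - Y. p x y) / real (K - 1 choose c)"
    and l_nonneg: "\<And>v y. l v y \<ge> 0"
    and lg_meas: "\<And>y. (\<lambda>x. l (g x) y) \<in> borel_measurable lborel"
    and finite_exp: "set_integrable lborel X (\<lambda>x. marginal K p x * cum_loss K l (g x))"
  shows "risk_u X K p pbar \<gamma> l g c = class_risk X K p l g"
proof -
  define S where "S = compl_sets K c"
  define C where "C = real (K - 1 choose c)"
  define r where "r = real (K - 1) / real c"
  define F where "F Y x = (1 - \<gamma>) / C * ((\<Sum>y'\<in>{1..K} - Y. p x y') * cum_loss K l (g x))
    - r / C * ((\<Sum>y'\<in>{1..K} - Y. p x y') * (\<Sum>y\<in>Y. l (g x) y))" for Y x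
  have C_pos: "C > 0"
    unfolding C_def using c by simp
  have c_range: "1 \<le> c" "c < K"
    using c by auto
  have S_sub: "Y \<subseteq> {1..K}" if "Y \<in> S" for Y
    using that unfolding S_def compl_sets_def by simp
  have pl_int: "set_integrable lborel X (\<lambda>x. p x y' * l (g x) y)"
    if "y' \<in> {1..K}" "y \<in> {1..K}" for y' y
    using finite_exp unfolding marginal_def cum_loss_def
    by (rule set_integrable_summand_product) (use that X_meas p_meas lg_meas p_nonneg l_nonneg in auto)
  have F_int: "set_integrable lborel X (F Y)" if "Y \<in> S" for Y
    unfolding F_def cum_loss_def using S_sub[OF that]
    by (intro set_integral_diff(1) set_integrable_mult_right set_integrable_product_of_sums pl_int) auto
  have "exp_compl X K c (pbar c) (\<lambda>x Y. (1 - \<gamma>) * cum_loss K l (g x) - r * (\<Sum>y\<in>Y. l (g x) y))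
      = (\<Sum>Y\<in>S. LINT x:X|lborel. F Y x)"
    unfolding exp_compl_def S_def[symmetric]
  proof (intro sum.cong refl set_lebesgue_integral_cong X_meas allI impI)
    fix Y x assume "Y \<in> S" "x \<in> X"
    then have pbar_x: "pbar c x Y = (\<Sum>y'\<in>{1..K} - Y. p x y') / C"
      using pbar_c unfolding S_def C_def by simp
    show "pbar c x Y * ((1 - \<gamma>) * cum_loss K l (g x) - r * (\<Sum>y\<in>Y. l (g x) y)) = F Y x"
      unfolding F_def pbar_x using C_pos by (simp add: field_simps)
  qed
  then have "risk_u X K p pbar \<gamma> l g c
      = (LINT x:X|lborel. (\<Sum>Y\<in>S. F Y x) + \<gamma> * (marginal K p x * cum_loss K l (g x)))"
    unfolding risk_u_def exp_marg_def r_def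
    using F_int finite_exp by (simp add: set_integral_sum set_integrable_sum)
  also have "\<dots> = (LINT x:X|lborel. \<Sum>y\<in>{1..K}. p x y * l (g x) y)"
  proof (intro set_lebesgue_integral_cong X_meas allI impI)
    fix x
    have "(\<Sum>Y\<in>S. F Y x) = (\<Sum>Y\<in>S. (\<Sum>y'\<in>{1..K} - Y. p x y') / C
        * ((1 - \<gamma>) * cum_loss K l (g x) - r * (\<Sum>y\<in>Y. l (g x) y)))"
      unfolding F_def using C_pos by (intro sum.cong refl) (simp add: field_simps)
    then show "(\<Sum>Y\<in>S. F Y x) + \<gamma> * (marginal K p x * cum_loss K l (g x))
        = (\<Sum>y\<in>{1..K}. p x y * l (g x) y)"
      using complementary_label_risk_identity[where A = "{1..K}" and c = c and p = "p x" and l = "l (g x)"] c_range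
      unfolding S_def compl_sets_def C_def r_def marginal_def cum_loss_def by simp
  qed
  also have "\<dots> = class_risk X K p l g"
    unfolding class_risk_def exp_joint_def by (rule set_integral_sum) (simp add: pl_int)
  finally show ?thesis .
qed

theorem theorem2:
  fixes X :: "'a::euclidean_space set"
    and p :: "'a \<Rightarrow> nat \<Rightarrow> real"
    and pbar :: "nat \<Rightarrow> 'a \<Rightarrow> nat set \<Rightarrow> real"
    and l :: "real^'k \<Rightarrow> nat \<Rightarrow> real"
    and g :: "'a \<Rightarrow> real^'k"
    and \<gamma> :: real
    and \<alpha> :: "nat \<Rightarrow> real"
    and K :: nat
  defines "K \<equiv> CARD('k)"
  assumes K2: "K \<ge> 2"
    and X_meas: "X \<in> sets lborel"
    and p_nonneg: "\<And>x y. x \<in> X \<Longrightarrow> y \<in> {1..K} \<Longrightarrow> p x y \<ge> 0"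
    and p_meas: "\<And>y. (\<lambda>x. p x y) \<in> borel_measurable lborel"
    and p_mass: "(\<Sum>y\<in>{1..K}. LINT x:X|lborel. p x y) = 1"
    and p_int: "\<And>y. set_integrable lborel X (\<lambda>x. p x y)"
    and pbar_def: "\<And>c x Y. c \<in> {1..K-1} \<Longrightarrow> x \<in> X \<Longrightarrow> Y \<in> compl_sets K c \<Longrightarrow>
        pbar c x Y = (\<Sum>y\<in>{1..K} - Y. p x y) / real (K - 1 choose c)"
    and gamma: "0 \<le> \<gamma>" "\<gamma> \<le> 1"
    and alpha_nonneg: "\<And>c. c \<in> {1..K-1} \<Longrightarrow> \<alpha> c \<ge> 0"
    and alpha_sum: "(\<Sum>c\<in>{1..K-1}. \<alpha> c) = 1"
    and l_nonneg: "\<And>v y. l v y \<ge> 0"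
    and lg_meas: "\<And>y. (\<lambda>x. l (g x) y) \<in> borel_measurable lborel"
    and finite_exp: "set_integrable lborel X (\<lambda>x. marginal K p x * cum_loss K l (g x))"
  shows "risk_MCUL X K p pbar \<gamma> \<alpha> l g = class_risk X K p l g"
proof -
  have "risk_u X K p pbar \<gamma> l g c = class_risk X K p l g" if c: "c \<in> {1..K-1}" for c
    using X_meas p_nonneg p_meas pbar_def[OF c] l_nonneg lg_meas finite_exp
    by (intro risk_u_eq_class_risk[OF c]) auto
  then have "risk_MCUL X K p pbar \<gamma> \<alpha> l g = (\<Sum>c\<in>{1..K-1}. \<alpha> c) * class_risk X K p l g"
    unfolding risk_MCUL_def by (simp add: sum_distrib_right)
  then show ?thesis
    using alpha_sum by simp
qed

end
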